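(* For each $n$ let $\tau_n$ be the $2^n\times 2^n$ diagonal matrix with every diagonal entry equal to $2^{-n}$. For every natural number $k$ there is a constant $t$ such that for all $n$, $QK^{2^{-k}}(\tau_n)\ge n+K(n)-t$.
   Context: Let $\mathbb{U}$ be a fixed universal prefix-free Turing machine and $K$ the associated prefix-free Kolmogorov complexity (for a natural number $n$, $K(n)$ is the complexity of $n$). Finite sets of vectors with complex algebraic entries are coded by natural numbers via a fixed canonical effective indexing; $\mathbb{U}(\sigma)\downarrow=F$ means that $\mathbb{U}$ on input $\sigma$ halts and outputs the code of $F$. $\mathbb{C}^{2^n}_{alg}$ denotes the set of vectors in $\mathbb{C}^{2^n}$ all of whose entries are complex algebraic numbers. All logarithms are base 2. For a density matrix $\tau$ on $\mathbb{C}^{2^{n}}$ write $|\tau|=n$. For $\epsilon>0$ define $QK^{\epsilon}(\tau)=\inf\{|\sigma|+\log|F| : \mathbb{U}(\sigma)\downarrow=F,\ F \text{ an orthonormal subset of } \mathbb{C}^{2^{|\tau|}}_{alg},\ \sum_{v\in F}\langle v|\tau|v\rangle>\epsilon\}$, with $\inf\emptyset=\infty$. *)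

theory Defs
  imports Complex_Main "HOL-Library.Nat_Bijection" "HOL-Library.Extended_Real"
    "HOL-Computational_Algebra.Polynomial"
begin

datatype recf = Zf | Sf | Idf nat | Cnf recf "recf list" | Prf recf recf | Mnf recf

inductive evalr :: "recf \<Rightarrow> nat list \<Rightarrow> nat \<Rightarrow> bool" where
  ev_Z: "evalr Zf xs 0"
| ev_S: "evalr Sf (x # xs) (Suc x)"
| ev_Id: "i < length xs \<Longrightarrow> evalr (Idf i) xs (xs ! i)"
| ev_Cn: "list_all2 (\<lambda>g z. evalr g xs z) gs zs \<Longrightarrow> evalr f zs y \<Longrightarrow> evalr (Cnf f gs) xs y"
| ev_Pr0: "evalr f xs y \<Longrightarrow> evalr (Prf f g) (0 # xs) y"
| ev_PrS: "evalr (Prf f g) (n # xs) z \<Longrightarrow> evalr g (z # n # xs) y \<Longrightarrow> evalr (Prf f g) (Suc n # xs) y"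
| ev_Mn: "evalr f (y # xs) 0 \<Longrightarrow> (\<forall>z<y. \<exists>w. w > 0 \<and> evalr f (z # xs) w) \<Longrightarrow> evalr (Mnf f) xs y"

text \<open>Bijective coding of binary strings by natural numbers.\<close>
fun bits_to_nat :: "bool list \<Rightarrow> nat" where
  "bits_to_nat [] = 0"
| "bits_to_nat (b # bs) = 2 * bits_to_nat bs + (if b then 2 else 1)"

definition partial_computable :: "(bool list \<Rightarrow> nat option) \<Rightarrow> bool" where
  "partial_computable M \<longleftrightarrow> (\<exists>f. \<forall>\<sigma> y. evalr f [bits_to_nat \<sigma>] y \<longleftrightarrow> M \<sigma> = Some y)"

definition prefix_free_machine :: "(bool list \<Rightarrow> nat option) \<Rightarrow> bool" where
  "prefix_free_machine M \<longleftrightarrow>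
     (\<forall>\<sigma> \<rho>. M \<sigma> \<noteq> None \<longrightarrow> M (\<sigma> @ \<rho>) \<noteq> None \<longrightarrow> \<rho> = [])"

definition universal_pf_machine :: "(bool list \<Rightarrow> nat option) \<Rightarrow> bool" where
  "universal_pf_machine U \<longleftrightarrow> partial_computable U \<and> prefix_free_machine U \<and>
     (\<forall>M. partial_computable M \<and> prefix_free_machine M \<longrightarrow>
        (\<exists>\<rho>. \<forall>\<sigma>. U (\<rho> @ \<sigma>) = M \<sigma>))"

definition Kc :: "(bool list \<Rightarrow> nat option) \<Rightarrow> nat \<Rightarrow> nat" where
  "Kc U n = (LEAST l. \<exists>\<sigma>. length \<sigma> = l \<and> U \<sigma> = Some n)"

text \<open>A rational number is coded as a pair (a, b) meaning a / (b+1).\<close>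
definition rat_dec :: "nat \<Rightarrow> real" where
  "rat_dec c = (case prod_decode c of (a, b) \<Rightarrow> real_of_int (int_decode a) / real (Suc b))"

text \<open>An algebraic number is coded by an integer polynomial and a rational rectangle
  [x1,x2] x [y1,y2]; the code is valid iff the polynomial is nonzero and has exactly one
  root in the rectangle, which is then the number denoted.\<close>
definition alg_dec :: "nat \<Rightarrow> complex option" where
  "alg_dec c = (case prod_decode c of (pc, rc) \<Rightarrow>
     let p = Poly (map (\<lambda>a. complex_of_int (int_decode a)) (list_decode pc));
         r = map rat_dec (list_decode rc);
         inR = (\<lambda>z. length r = 4 \<and> r!0 \<le> Re z \<and> Re z \<le> r!1 \<and> r!2 \<le> Im z \<and> Im z \<le> r!3)
     in if p \<noteq> 0 \<and> (\<exists>!z. inR z \<and> poly p z = 0)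
        then Some (THE z. inR z \<and> poly p z = 0) else None)"

definition vec_dec :: "nat \<Rightarrow> complex list option" where
  "vec_dec c = (let cs = map alg_dec (list_decode c) in
     if None \<in> set cs then None else Some (map the cs))"

definition vset_dec :: "nat \<Rightarrow> complex list set option" where
  "vset_dec c = (let vs = map vec_dec (list_decode c) in
     if None \<in> set vs then None else Some (set (map the vs)))"

text \<open>Vectors in C^(2^m) are lists of length 2^m; matrices are functions on indices.\<close>
definition cinner :: "nat \<Rightarrow> complex list \<Rightarrow> complex list \<Rightarrow> complex" where
  "cinner d v w = (\<Sum>i<d. cnj (v ! i) * w ! i)"

definition orthonormal_alg :: "nat \<Rightarrow> complex list set \<Rightarrow> bool" where
  "orthonormal_alg m F \<longleftrightarrow> finite F \<and>
     (\<forall>v\<in>F. length v = 2 ^ m \<and> (\<forall>i<2 ^ m. algebraic (v ! i))) \<and>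
     (\<forall>v\<in>F. \<forall>w\<in>F. cinner (2 ^ m) v w = (if v = w then 1 else 0))"

definition expect :: "nat \<Rightarrow> (nat \<Rightarrow> nat \<Rightarrow> complex) \<Rightarrow> complex list \<Rightarrow> complex" where
  "expect m \<tau> v = (\<Sum>i<2 ^ m. \<Sum>j<2 ^ m. cnj (v ! i) * \<tau> i j * v ! j)"

text \<open>QK^eps(tau) for tau a density matrix on C^(2^m) (so |tau| = m).\<close>
definition QK :: "(bool list \<Rightarrow> nat option) \<Rightarrow> real \<Rightarrow> nat \<Rightarrow> (nat \<Rightarrow> nat \<Rightarrow> complex) \<Rightarrow> ereal" where
  "QK U \<epsilon> m \<tau> = Inf {ereal (real (length \<sigma>) + log 2 (real (card F))) | \<sigma> F c.
      U \<sigma> = Some c \<and> vset_dec c = Some F \<and> orthonormal_alg m F \<and>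
      Re (\<Sum>v\<in>F. expect m \<tau> v) > \<epsilon>}"

definition tau_mixed :: "nat \<Rightarrow> nat \<Rightarrow> nat \<Rightarrow> complex" where
  "tau_mixed n i j = (if i = j \<and> i < 2 ^ n then complex_of_real (2 powr (- real n)) else 0)"

end

theory Submission
  imports Defs
begin

text \<open>A code of an orthonormal set F of vectors in C^(2^n) determines n, by a total
  computable decoding (read the first vector and take log2 of its length). Composing the
  universal machine with this decoding, every description \<sigma> of F yields a description of n
  of length |\<sigma>| + O(1), so K(n) \<le> |\<sigma>| + O(1). On the other hand, on the maximally mixed
  state every unit vector has weight 2^(-n), so weight above 2^(-k) forces |F| > 2^(n-k),
  i.e. log |F| > n - k. Adding the two bounds gives |\<sigma>| + log |F| \<ge> n + K(n) - O(1).\<close>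

section \<open>Total computable functions\<close>

lemma evalr_deterministic: "evalr f xs y \<Longrightarrow> evalr f xs y' \<Longrightarrow> y = y'"
proof (induction arbitrary: y' rule: evalr.induct)
  case (ev_Z xs)
  from ev_Z.prems show ?case by (cases rule: evalr.cases) simp_all
next
  case (ev_S x xs)
  from ev_S.prems show ?case by (cases rule: evalr.cases) simp_all
next
  case (ev_Id i xs)
  from ev_Id.prems show ?case by (cases rule: evalr.cases) simp_all
next
  case (ev_Cn xs gs zs f y)
  from ev_Cn.prems obtain zs' where zs': "list_all2 (\<lambda>g z. evalr g xs z) gs zs'" "evalr f zs' y'"
    by (cases rule: evalr.cases) simp_all
  have "zs = zs'" using ev_Cn.IH(1) zs'(1)
    by (induction gs arbitrary: zs zs') (auto simp: list_all2_Cons1)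
  then show ?case using ev_Cn.IH(2) zs'(2) by simp
next
  case (ev_Pr0 f xs y g)
  from ev_Pr0.prems show ?case by (cases rule: evalr.cases) (simp_all add: ev_Pr0.IH)
next
  case (ev_PrS f g n xs z y)
  from ev_PrS.prems obtain z' where z': "evalr (Prf f g) (n # xs) z'" "evalr g (z' # n # xs) y'"
    by (cases rule: evalr.cases) auto
  then show ?case using ev_PrS.IH by simp
next
  case (ev_Mn f y xs)
  from ev_Mn.prems obtain y2 where y2: "y' = y2" "evalr f (y2 # xs) 0"
      "\<forall>z<y2. \<exists>w. w > 0 \<and> evalr f (z # xs) w"
    by (cases rule: evalr.cases) simp_all
  have "\<not> y < y2" using y2(3) ev_Mn.IH(1) by fastforce
  moreover have "\<not> y2 < y" using y2(2) ev_Mn.IH(2) by fastforce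
  ultimately show ?case using y2(1) by simp
qed

definition computes :: "recf \<Rightarrow> nat \<Rightarrow> (nat list \<Rightarrow> nat) \<Rightarrow> bool" where
  "computes r k f \<longleftrightarrow> (\<forall>xs. length xs = k \<longrightarrow> evalr r xs (f xs))"

definition computable :: "nat \<Rightarrow> (nat list \<Rightarrow> nat) \<Rightarrow> bool" where
  "computable k f \<longleftrightarrow> (\<exists>r. computes r k f)"

lemma computable_proj: "i < k \<Longrightarrow> computable k (\<lambda>xs. xs ! i)"
  unfolding computable_def computes_def by (auto intro!: exI[of _ "Idf i"] ev_Id)

lemma computable_zero: "computable k (\<lambda>xs. 0)"
  unfolding computable_def computes_def by (auto intro!: exI[of _ Zf] ev_Z)

lemma computes_list_all2:
  assumes "\<forall>\<phi>\<in>set fs. computable k \<phi>"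
  shows "\<exists>rs. list_all2 (\<lambda>r \<phi>. computes r k \<phi>) rs fs"
  using assms
proof (induction fs)
  case (Cons \<phi> fs)
  then obtain rs where "list_all2 (\<lambda>r \<phi>. computes r k \<phi>) rs fs" by auto
  moreover obtain r where "computes r k \<phi>" using Cons.prems unfolding computable_def by auto
  ultimately show ?case by (auto intro!: exI[of _ "r # rs"])
qed simp

lemma computable_comp:
  assumes h: "computable m h" and len: "length fs = m" and fs: "\<forall>\<phi>\<in>set fs. computable k \<phi>"
  shows "computable k (\<lambda>xs. h (map (\<lambda>\<phi>. \<phi> xs) fs))"
proof -
  obtain rh where rh: "computes rh m h" using h unfolding computable_def by auto
  obtain rs where rs: "list_all2 (\<lambda>r \<phi>. computes r k \<phi>) rs fs"
    using computes_list_all2[OF fs] by auto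
  have "evalr (Cnf rh rs) xs (h (map (\<lambda>\<phi>. \<phi> xs) fs))" if "length xs = k" for xs
  proof (rule ev_Cn)
    show "list_all2 (\<lambda>g z. evalr g xs z) rs (map (\<lambda>\<phi>. \<phi> xs) fs)"
      unfolding list_all2_map2 using rs
      by (rule list_all2_mono) (use that in \<open>auto simp: computes_def\<close>)
    show "evalr rh (map (\<lambda>\<phi>. \<phi> xs) fs) (h (map (\<lambda>\<phi>. \<phi> xs) fs))"
      using rh len by (auto simp: computes_def)
  qed
  then show ?thesis unfolding computable_def computes_def by blast
qed

lemma computable_comp1: "computable 1 h \<Longrightarrow> computable k a \<Longrightarrow> computable k (\<lambda>xs. h [a xs])"
  using computable_comp[of 1 h "[a]" k] by simp

lemma computable_comp2:
  "computable 2 h \<Longrightarrow> computable k a \<Longrightarrow> computable k b \<Longrightarrow> computable k (\<lambda>xs. h [a xs, b xs])"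
  using computable_comp[of 2 h "[a, b]" k] by simp

text \<open>The arity is a separate variable k' so that the rule also applies to numerals.\<close>
lemma computable_prim_rec:
  assumes a: "computable k a" and b: "computable (Suc (Suc k)) b"
    and f0: "\<And>ys. length ys = k \<Longrightarrow> f (0 # ys) = a ys"
    and fSuc: "\<And>n ys. length ys = k \<Longrightarrow> f (Suc n # ys) = b (f (n # ys) # n # ys)"
    and k': "k' = Suc k"
  shows "computable k' f"
proof -
  obtain ra where ra: "computes ra k a" using a unfolding computable_def by auto
  obtain rb where rb: "computes rb (Suc (Suc k)) b" using b unfolding computable_def by auto
  have evalr_Prf: "evalr (Prf ra rb) (n # ys) (f (n # ys))" if "length ys = k" for n ys
  proof (induction n)
    case 0
    then show ?case using ra that f0 by (auto simp: computes_def intro!: ev_Pr0)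
  next
    case (Suc n)
    moreover have "evalr rb (f (n # ys) # n # ys) (b (f (n # ys) # n # ys))"
      using rb that by (auto simp: computes_def)
    ultimately show ?case using fSuc[OF that] by (auto intro: ev_PrS)
  qed
  have "computes (Prf ra rb) (Suc k) f"
    unfolding computes_def by (auto simp: length_Suc_conv evalr_Prf)
  then show ?thesis unfolding computable_def k' by auto
qed

lemma computable_Suc: "computable k a \<Longrightarrow> computable k (\<lambda>xs. Suc (a xs))"
proof -
  have "computable 1 (\<lambda>xs. Suc (xs ! 0))"
    unfolding computable_def computes_def
    by (auto intro!: exI[of _ Sf] simp: length_Suc_conv ev_S)
  then show "computable k a \<Longrightarrow> ?thesis" using computable_comp1 by fastforce
qed

lemma computable_const: "computable k (\<lambda>xs. c)"
  by (induction c) (auto intro: computable_zero computable_Suc)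

lemma computable_add: "computable k a \<Longrightarrow> computable k b \<Longrightarrow> computable k (\<lambda>xs. a xs + b xs)"
proof -
  have "computable 2 (\<lambda>xs. xs ! 0 + xs ! 1)"
    by (rule computable_prim_rec[where k=1 and a="\<lambda>ys. ys ! 0" and b="\<lambda>zs. Suc (zs ! 0)"])
      (intro computable_proj computable_Suc | simp)+
  then show "computable k a \<Longrightarrow> computable k b \<Longrightarrow> ?thesis" using computable_comp2 by fastforce
qed

lemma computable_mult: "computable k a \<Longrightarrow> computable k b \<Longrightarrow> computable k (\<lambda>xs. a xs * b xs)"
proof -
  have "computable 2 (\<lambda>xs. xs ! 0 * xs ! 1)"
    by (rule computable_prim_rec[where k=1 and a="\<lambda>ys. 0" and b="\<lambda>zs. zs ! 0 + zs ! 2"])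
      (intro computable_proj computable_add computable_zero | simp)+
  then show "computable k a \<Longrightarrow> computable k b \<Longrightarrow> ?thesis" using computable_comp2 by fastforce
qed

lemma computable_pred: "computable k a \<Longrightarrow> computable k (\<lambda>xs. a xs - 1)"
proof -
  have "computable 1 (\<lambda>xs. xs ! 0 - 1)"
    by (rule computable_prim_rec[where k=0 and a="\<lambda>ys. 0" and b="\<lambda>zs. zs ! 1"])
      (intro computable_proj computable_zero | simp)+
  then show "computable k a \<Longrightarrow> ?thesis" using computable_comp1 by fastforce
qed

lemma computable_diff: "computable k a \<Longrightarrow> computable k b \<Longrightarrow> computable k (\<lambda>xs. a xs - b xs)"
proof -
  have "computable 2 (\<lambda>xs. xs ! 1 - xs ! 0)"
    by (rule computable_prim_rec[where k=1 and a="\<lambda>ys. ys ! 0" and b="\<lambda>zs. zs ! 0 - 1"])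
      (intro computable_proj computable_pred | simp)+
  then show "computable k a \<Longrightarrow> computable k b \<Longrightarrow> ?thesis"
    using computable_comp2[of _ k b a] by fastforce
qed

lemma computable_triangle: "computable k a \<Longrightarrow> computable k (\<lambda>xs. triangle (a xs))"
proof -
  have "computable 1 (\<lambda>xs. triangle (xs ! 0))"
    by (rule computable_prim_rec[where k=0 and a="\<lambda>ys. 0" and b="\<lambda>zs. zs ! 0 + Suc (zs ! 1)"])
      (intro computable_proj computable_add computable_Suc computable_zero | simp)+
  then show "computable k a \<Longrightarrow> ?thesis" using computable_comp1 by fastforce
qed

lemma computable_power2: "computable k a \<Longrightarrow> computable k (\<lambda>xs. 2 ^ a xs)"
proof -
  have "computable 1 (\<lambda>xs. 2 ^ (xs ! 0))"
    by (rule computable_prim_rec[where k=0 and a="\<lambda>ys. 1" and b="\<lambda>zs. zs ! 0 + zs ! 0"])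
      (intro computable_proj computable_add computable_const | simp)+
  then show "computable k a \<Longrightarrow> ?thesis" using computable_comp1 by fastforce
qed

section \<open>Arithmetic decoding of list codes\<close>

text \<open>The tests below use 1 - (1 - y) for "y \<noteq> 0" and 1 - (y - x) for "y \<le> x", the
  only kind of case distinction available through truncated subtraction.\<close>

fun triangle_root :: "nat \<Rightarrow> nat" where
  "triangle_root 0 = 0"
| "triangle_root (Suc n) =
     triangle_root n + (1 - (triangle (Suc (triangle_root n)) - Suc n))"

lemma triangle_root_bounds:
  "triangle (triangle_root n) \<le> n \<and> n < triangle (Suc (triangle_root n))"
proof (induction n)
  case (Suc n)
  then show ?case
    by (cases "triangle (Suc (triangle_root n)) \<le> Suc n") simp_all
qed simp

definition pair_fst :: "nat \<Rightarrow> nat" where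
  "pair_fst n = n - triangle (triangle_root n)"

definition pair_snd :: "nat \<Rightarrow> nat" where
  "pair_snd n = triangle_root n - pair_fst n"

lemma prod_decode_eq_pair: "prod_decode n = (pair_fst n, pair_snd n)"
proof -
  have "triangle (triangle_root n) \<le> n" "n < triangle (triangle_root n) + Suc (triangle_root n)"
    using triangle_root_bounds[of n] by auto
  then have "prod_encode (pair_fst n, pair_snd n) = n"
    unfolding prod_encode_def pair_fst_def pair_snd_def by auto
  then show ?thesis by (metis prod_encode_inverse)
qed

definition list_tl_code :: "nat \<Rightarrow> nat" where
  "list_tl_code y = (1 - (1 - y)) * pair_snd (y - 1)"

lemma list_tl_code_list_encode: "list_tl_code (list_encode l) = list_encode (tl l)"
proof (cases l)
  case (Cons a l')
  then show ?thesis
    using prod_decode_eq_pair[of "prod_encode (a, list_encode l')"] by (simp add: list_tl_code_def)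
qed (simp add: list_tl_code_def)

lemma funpow_list_tl_code: "(list_tl_code ^^ i) (list_encode l) = list_encode (drop i l)"
  by (induction i) (simp_all add: list_tl_code_list_encode drop_Suc tl_drop)

lemma length_le_list_encode: "length l \<le> list_encode l"
proof (induction l)
  case (Cons a l)
  then show ?case using le_prod_encode_2[of "list_encode l" a] by simp
qed simp

fun length_upto_code :: "nat \<Rightarrow> nat \<Rightarrow> nat" where
  "length_upto_code 0 x = 0"
| "length_upto_code (Suc j) x = length_upto_code j x + (1 - (1 - (list_tl_code ^^ j) x))"

lemma length_upto_code_list_encode: "length_upto_code j (list_encode l) = min j (length l)"
proof (induction j)
  case (Suc j)
  have list_encode_eq_0: "list_encode xs = 0 \<longleftrightarrow> xs = []" for xs :: "nat list"
    by (cases xs) auto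
  have "(list_tl_code ^^ j) (list_encode l) = 0 \<longleftrightarrow> \<not> j < length l"
    by (auto simp: funpow_list_tl_code list_encode_eq_0)
  then show ?case using Suc by (cases "j < length l") auto
qed simp

text \<open>A list code bounds the length of the list, so it is a large enough search bound.\<close>
definition length_code :: "nat \<Rightarrow> nat" where
  "length_code x = length_upto_code x x"

lemma length_code_eq: "length_code x = length (list_decode x)"
  using length_upto_code_list_encode[of x "list_decode x"] length_le_list_encode[of "list_decode x"]
  by (simp add: length_code_def)

fun log2_upto :: "nat \<Rightarrow> nat \<Rightarrow> nat" where
  "log2_upto 0 L = 0"
| "log2_upto (Suc j) L = log2_upto j L + (1 - (2 ^ Suc j - L))"

lemma log2_upto_power2: "log2_upto j (2 ^ n) = min j n"
proof (induction j)
  case (Suc j)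
  have "(2::nat) ^ Suc j \<le> 2 ^ n \<longleftrightarrow> j < n"
    using power_increasing_iff[of "2::nat" "Suc j" n] by (simp add: Suc_le_eq)
  then show ?case using Suc by (cases "j < n") auto
qed simp

definition log2_code :: "nat \<Rightarrow> nat" where
  "log2_code L = log2_upto L L"

lemma log2_code_power2: "log2_code (2 ^ n) = n"
  unfolding log2_code_def log2_upto_power2 by (simp add: min_absorb2 less_imp_le)

text \<open>For a code of a nonempty set of vectors in C^(2^n): the exponent n.\<close>
definition dim_exponent_code :: "nat \<Rightarrow> nat" where
  "dim_exponent_code c = log2_code (length_code (pair_fst (c - 1)))"

lemma dim_exponent_code_correct:
  assumes F: "vset_dec c = Some F" and orth: "orthonormal_alg n F" and "F \<noteq> {}"
  shows "dim_exponent_code c = n"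
proof -
  define vs where "vs = map vec_dec (list_decode c)"
  have "None \<notin> set vs" and F_eq: "F = set (map the vs)"
    using F unfolding vset_dec_def vs_def Let_def by (auto split: if_splits)
  have "list_decode c \<noteq> []" using \<open>F \<noteq> {}\<close> F_eq vs_def by auto
  then obtain m where m: "c = Suc m" by (cases c) auto
  define x where "x = pair_fst m"
  have "list_decode c = x # list_decode (pair_snd m)"
    using m by (simp add: prod_decode_eq_pair x_def)
  then have "vec_dec x \<in> set vs" by (simp add: vs_def)
  then obtain w where w: "vec_dec x = Some w" using \<open>None \<notin> set vs\<close> by (metis option.exhaust)
  have "w \<in> F" using F_eq \<open>vec_dec x \<in> set vs\<close> w by force
  then have "length w = 2 ^ n" using orth unfolding orthonormal_alg_def by auto
  moreover have "length w = length (list_decode x)"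
    using w unfolding vec_dec_def Let_def by (auto split: if_splits)
  ultimately have "length_code x = 2 ^ n" by (simp add: length_code_eq)
  then show ?thesis using m by (simp add: dim_exponent_code_def x_def log2_code_power2)
qed

lemma computable_triangle_root: "computable k a \<Longrightarrow> computable k (\<lambda>xs. triangle_root (a xs))"
proof -
  have "computable 1 (\<lambda>xs. triangle_root (xs ! 0))"
    by (rule computable_prim_rec[where k=0 and a="\<lambda>ys. 0"
          and b="\<lambda>zs. zs ! 0 + (1 - (triangle (Suc (zs ! 0)) - Suc (zs ! 1)))"])
      (intro computable_proj computable_add computable_diff computable_triangle
        computable_Suc computable_const | simp)+
  then show "computable k a \<Longrightarrow> ?thesis" using computable_comp1 by fastforce
qed

lemma computable_pair_fst: "computable k a \<Longrightarrow> computable k (\<lambda>xs. pair_fst (a xs))"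
  unfolding pair_fst_def by (intro computable_diff computable_triangle computable_triangle_root)

lemma computable_list_tl_code: "computable k a \<Longrightarrow> computable k (\<lambda>xs. list_tl_code (a xs))"
  unfolding list_tl_code_def pair_snd_def
  by (intro computable_mult computable_diff computable_pair_fst computable_triangle_root
      computable_pred computable_const)

lemma computable_funpow_list_tl_code:
  "computable k a \<Longrightarrow> computable k b \<Longrightarrow> computable k (\<lambda>xs. (list_tl_code ^^ a xs) (b xs))"
proof -
  have "computable 2 (\<lambda>xs. (list_tl_code ^^ (xs ! 0)) (xs ! 1))"
    by (rule computable_prim_rec[where k=1 and a="\<lambda>ys. ys ! 0" and b="\<lambda>zs. list_tl_code (zs ! 0)"])
      (intro computable_proj computable_list_tl_code | simp)+
  then show "computable k a \<Longrightarrow> computable k b \<Longrightarrow> ?thesis" using computable_comp2 by fastforce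
qed

lemma computable_length_code: "computable k a \<Longrightarrow> computable k (\<lambda>xs. length_code (a xs))"
proof -
  have "computable 2 (\<lambda>xs. length_upto_code (xs ! 0) (xs ! 1))"
    by (rule computable_prim_rec[where k=1 and a="\<lambda>ys. 0"
          and b="\<lambda>zs. zs ! 0 + (1 - (1 - (list_tl_code ^^ (zs ! 1)) (zs ! 2)))"])
      (intro computable_proj computable_add computable_diff computable_const
        computable_funpow_list_tl_code | simp)+
  then show "computable k a \<Longrightarrow> ?thesis"
    unfolding length_code_def using computable_comp2 by fastforce
qed

lemma computable_log2_code: "computable k a \<Longrightarrow> computable k (\<lambda>xs. log2_code (a xs))"
proof -
  have "computable 2 (\<lambda>xs. log2_upto (xs ! 0) (xs ! 1))"
    by (rule computable_prim_rec[where k=1 and a="\<lambda>ys. 0"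
          and b="\<lambda>zs. zs ! 0 + (1 - (2 ^ Suc (zs ! 1) - zs ! 2))"])
      (intro computable_proj computable_add computable_diff computable_power2
        computable_Suc computable_const | simp)+
  then show "computable k a \<Longrightarrow> ?thesis"
    unfolding log2_code_def using computable_comp2 by fastforce
qed

lemma computable_dim_exponent_code: "computable 1 (\<lambda>xs. dim_exponent_code (xs ! 0))"
  unfolding dim_exponent_code_def
  by (intro computable_log2_code computable_length_code computable_pair_fst computable_pred
      computable_proj) simp

section \<open>Complexity of computable images\<close>

lemma partial_computable_map_option:
  assumes U: "partial_computable U" and g: "computable 1 (\<lambda>xs. g (xs ! 0))"
  shows "partial_computable (\<lambda>\<sigma>. map_option g (U \<sigma>))"
proof -
  obtain fU where fU: "\<And>\<sigma> y. evalr fU [bits_to_nat \<sigma>] y \<longleftrightarrow> U \<sigma> = Some y"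
    using U unfolding partial_computable_def by blast
  obtain rg where rg_computes: "computes rg 1 (\<lambda>xs. g (xs ! 0))"
    using g unfolding computable_def by blast
  have rg: "evalr rg [z] (g z)" for z
    using rg_computes[unfolded computes_def, rule_format, of "[z]"] by simp
  have "evalr (Cnf rg [fU]) [bits_to_nat \<sigma>] y \<longleftrightarrow> map_option g (U \<sigma>) = Some y" for \<sigma> y
  proof
    assume "evalr (Cnf rg [fU]) [bits_to_nat \<sigma>] y"
    then obtain zs where zs: "list_all2 (\<lambda>g z. evalr g [bits_to_nat \<sigma>] z) [fU] zs" "evalr rg zs y"
      by (cases rule: evalr.cases) auto
    then obtain z where "zs = [z]" "evalr fU [bits_to_nat \<sigma>] z" by (auto simp: list_all2_Cons1)
    then have "U \<sigma> = Some z" "y = g z" using fU zs(2) rg evalr_deterministic by blast+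
    then show "map_option g (U \<sigma>) = Some y" by simp
  next
    assume "map_option g (U \<sigma>) = Some y"
    then obtain z where "U \<sigma> = Some z" "y = g z" by auto
    then show "evalr (Cnf rg [fU]) [bits_to_nat \<sigma>] y"
      using fU rg by (auto intro!: ev_Cn[where zs="[z]"])
  qed
  then show ?thesis unfolding partial_computable_def by blast
qed

lemma Kc_le_length: "U \<sigma> = Some n \<Longrightarrow> Kc U n \<le> length \<sigma>"
  unfolding Kc_def by (rule Least_le) blast

lemma Kc_computable_image_le:
  assumes U: "universal_pf_machine U" and g: "computable 1 (\<lambda>xs. g (xs ! 0))"
  obtains c where "\<And>\<sigma> m. U \<sigma> = Some m \<Longrightarrow> Kc U (g m) \<le> length \<sigma> + c"
proof -
  have "partial_computable (\<lambda>\<sigma>. map_option g (U \<sigma>))"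
    using U g partial_computable_map_option unfolding universal_pf_machine_def by blast
  moreover have "prefix_free_machine (\<lambda>\<sigma>. map_option g (U \<sigma>))"
    using U unfolding universal_pf_machine_def prefix_free_machine_def by simp
  ultimately obtain \<rho> where \<rho>: "\<And>\<sigma>. U (\<rho> @ \<sigma>) = map_option g (U \<sigma>)"
    using U unfolding universal_pf_machine_def by blast
  have "Kc U (g m) \<le> length \<sigma> + length \<rho>" if "U \<sigma> = Some m" for \<sigma> m
    using Kc_le_length[of U "\<rho> @ \<sigma>" "g m"] \<rho>[of \<sigma>] that by simp
  then show thesis by (rule that)
qed

section \<open>The maximally mixed state\<close>

lemma expect_tau_mixed_unit:
  assumes "length v = 2 ^ n" "cinner (2 ^ n) v v = 1"
  shows "expect n (tau_mixed n) v = complex_of_real (2 powr (- real n))"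
proof -
  let ?c = "complex_of_real (2 powr (- real n))"
  have row: "(\<Sum>j<2 ^ n. cnj (v ! i) * tau_mixed n i j * v ! j) = ?c * (cnj (v ! i) * v ! i)"
    if "i < 2 ^ n" for i
  proof -
    have "(\<Sum>j<2 ^ n. cnj (v ! i) * tau_mixed n i j * v ! j)
        = (\<Sum>j<2 ^ n. if j = i then ?c * (cnj (v ! i) * v ! i) else 0)"
      by (rule sum.cong) (auto simp: tau_mixed_def that)
    then show ?thesis using that by simp
  qed
  have "expect n (tau_mixed n) v = ?c * cinner (2 ^ n) v v"
    by (simp add: expect_def cinner_def sum_distrib_left row)
  then show ?thesis using assms by simp
qed

lemma weight_tau_mixed:
  assumes "orthonormal_alg n F"
  shows "Re (\<Sum>v\<in>F. expect n (tau_mixed n) v) = real (card F) * 2 powr (- real n)"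
proof -
  have "(\<Sum>v\<in>F. expect n (tau_mixed n) v) = (\<Sum>v\<in>F. complex_of_real (2 powr (- real n)))"
    by (rule sum.cong) (use assms in \<open>auto simp: orthonormal_alg_def intro!: expect_tau_mixed_unit\<close>)
  then show ?thesis by simp
qed

lemma log_card_gt_of_weight_tau_mixed:
  assumes "orthonormal_alg n F" and "2 powr (- real k) < Re (\<Sum>v\<in>F. expect n (tau_mixed n) v)"
  shows "F \<noteq> {}" and "real n - real k < log 2 (real (card F))"
proof -
  have weight: "2 powr (- real k) < real (card F) * 2 powr (- real n)"
    using assms weight_tau_mixed by simp
  then have "card F > 0" by (cases "card F") (auto simp: not_less)
  then show "F \<noteq> {}" by auto
  have "2 powr (real n - real k) = 2 powr (- real k) * 2 powr (real n)"
    by (simp add: powr_add[symmetric])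
  also have "\<dots> < real (card F) * 2 powr (- real n) * 2 powr (real n)"
    using weight by simp
  also have "\<dots> = real (card F)" by (simp add: powr_add[symmetric] mult.assoc)
  finally show "real n - real k < log 2 (real (card F))"
    using \<open>card F > 0\<close> by (subst less_log_iff) auto
qed

theorem mainTheorem5:
  fixes U :: "bool list \<Rightarrow> nat option"
  assumes "universal_pf_machine U"
  shows "\<forall>k::nat. \<exists>t::real. \<forall>n::nat.
           QK U (2 powr (- real k)) n (tau_mixed n) \<ge> ereal (real n + real (Kc U n) - t)"
proof (intro allI)
  fix k :: nat
  obtain c where c: "\<And>\<sigma> m. U \<sigma> = Some m \<Longrightarrow> Kc U (dim_exponent_code m) \<le> length \<sigma> + c"
    using Kc_computable_image_le[OF assms computable_dim_exponent_code] by blast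
  have "QK U (2 powr (- real k)) n (tau_mixed n) \<ge> ereal (real n + real (Kc U n) - (c + k))"
    for n
    unfolding QK_def
  proof (rule Inf_greatest, clarify)
    fix \<sigma> F code
    assume U: "U \<sigma> = Some code" and F: "vset_dec code = Some F" and orth: "orthonormal_alg n F"
      and weight: "2 powr (- real k) < Re (\<Sum>v\<in>F. expect n (tau_mixed n) v)"
    have "Kc U n \<le> length \<sigma> + c"
      using c[OF U] dim_exponent_code_correct[OF F orth]
        log_card_gt_of_weight_tau_mixed(1)[OF orth weight] by simp
    then show "ereal (real n + real (Kc U n) - (c + k))
        \<le> ereal (real (length \<sigma>) + log 2 (real (card F)))"
      using log_card_gt_of_weight_tau_mixed(2)[OF orth weight] by simp
  qed
  then show "\<exists>t::real. \<forall>n. QK U (2 powr (- real k)) n (tau_mixed n) \<ge> ereal (real n + real (Kc U n) - t)"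
    by blast
qed

end
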